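(* Define $g:\mathbb N\to\mathbb N$ by $$g(n)=\begin{cases}\lfloor\varphi n\rfloor, & n\in R_{2,0},\\ \lfloor\varphi n-2\rfloor, & n\in R_{1,0},\\ \lfloor(\varphi-1) n+2\rfloor, & n\in R_{2,2},\\ \lfloor(\varphi-1) n+1\rfloor, & n\in R_{3,1}.\end{cases}$$ Then $g$ is an $R_{i,j}$-permutation of $\mathbb N$ of order $2$ (a bijection of $\mathbb N$ with $g\circ g=\mathrm{id}\neq g$). Its first values are $2,1,4,3,6,5,9,12,7,14,\dots$.
   Context: $\mathbb N=\{1,2,\dots\}$, $\varphi=\frac{1+\sqrt5}{2}$, $F$ the Fibonacci numbers ($F(0)=0,F(1)=F(2)=1$). For $i\in\mathbb Z^{\ge0},j\in\mathbb Z$, $R_{i,j}$ is the range of $n\mapsto F(i+1)\lfloor n\varphi\rfloor+F(i)n-j$, $n\in\mathbb N$. An $R_{i,j}$-permutation is a permutation $\pi$ of $\mathbb N$ defined piecewise on a finite partition of $\mathbb N$ into sets $R_{i,j}$, with $\pi(n)=\lfloor(a\varphi+b)n+c\rfloor$ on each piece for integers $a,b,c$ depending on the piece. *)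

theory Defs
  imports Complex_Main "HOL-Number_Theory.Fib"
begin

definition phi :: real where "phi = (1 + sqrt 5) / 2"

definition Npos :: "int set" where "Npos = {n. n \<ge> 1}"

definition R :: "nat \<Rightarrow> int \<Rightarrow> int set" where
  "R i j = {int (fib (i+1)) * \<lfloor>real_of_int n * phi\<rfloor> + int (fib i) * n - j | n. n \<ge> 1}"

definition piece_set :: "nat \<times> int \<times> int \<times> int \<times> int \<Rightarrow> int set" where
  "piece_set p = (case p of (i,j,a,b,c) \<Rightarrow> R i j)"

definition piece_fun :: "nat \<times> int \<times> int \<times> int \<times> int \<Rightarrow> int \<Rightarrow> int" where
  "piece_fun p n = (case p of (i,j,a,b,c) \<Rightarrow>
       \<lfloor>(of_int a * phi + of_int b) * of_int n + of_int c\<rfloor>)"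

definition R_permutation :: "(int \<Rightarrow> int) \<Rightarrow> bool" where
  "R_permutation \<pi> \<longleftrightarrow> bij_betw \<pi> Npos Npos \<and>
     (\<exists>ps :: (nat \<times> int \<times> int \<times> int \<times> int) list.
        (\<forall>k l. k < length ps \<and> l < length ps \<and> k \<noteq> l \<longrightarrow>
               piece_set (ps ! k) \<inter> piece_set (ps ! l) = {}) \<and>
        (\<Union>p\<in>set ps. piece_set p) = Npos \<and>
        (\<forall>p\<in>set ps. \<forall>n\<in>piece_set p. \<pi> n = piece_fun p n))"

text \<open>The function \<open>g\<close> of the theorem (values outside \<open>\<nat>\<close> are irrelevant).\<close>
definition g :: "int \<Rightarrow> int" where
  "g n = (if n \<in> R 2 0 then \<lfloor>phi * of_int n\<rfloor>
          else if n \<in> R 1 0 then \<lfloor>phi * of_int n - 2\<rfloor>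
          else if n \<in> R 2 2 then \<lfloor>(phi - 1) * of_int n + 2\<rfloor>
          else if n \<in> R 3 1 then \<lfloor>(phi - 1) * of_int n + 1\<rfloor>
          else n)"

end

theory Submission
  imports Defs "HOL-Computational_Algebra.Primes" "HOL-Library.Disjoint_Sets"
begin

(* Write A n = floor (n phi) and B n = A n + n = floor (n phi^2) for the lower and upper Wythoff
   sequences. Since 1/phi + 1/phi^2 = 1, Rayleigh's theorem says that A and B partition the
   positive integers N; as A is injective, iterating this twice splits N into the disjoint
   union of B(N), AB(N), AAB(N) and AAA(N). The identities A (A n) = B n - 1 and A (B n) = A n + B n
   identify these four sets with R 1 0, R 2 0, R 3 1 and R 2 2, and together with
   floor ((phi - 1) A m) = m - 1 they show that g swaps B n with AAA n and AB n with AAB n. *)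

lemma sqrt_prime_not_rat:
  fixes p :: nat
  assumes "prime p"
  shows "sqrt (real p) \<notin> \<rat>"
proof
  assume "sqrt (real p) \<in> \<rat>"
  then obtain m n :: nat
    where n: "n \<noteq> 0" and mn: "\<bar>sqrt (real p)\<bar> = real m / real n" and "coprime m n"
    by (rule Rats_abs_nat_div_natE)
  have "real m = sqrt (real p) * real n" using mn n by (simp add: field_simps)
  then have "real (m^2) = real (p * n^2)" by (simp add: power_mult_distrib)
  then have sq: "m^2 = p * n^2" by (simp only: of_nat_eq_iff)
  then have "p dvd m" using assms prime_dvd_power by (metis dvd_triv_left)
  then obtain k where k: "m = p * k" ..
  with sq have "p * n^2 = p * (p * k^2)" by algebra
  then have "n^2 = p * k^2" using prime_gt_0_nat[OF assms] by simp
  then have "p dvd n" using assms prime_dvd_power by (metis dvd_triv_left)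
  with \<open>coprime m n\<close> \<open>p dvd m\<close> have "p = 1" by (rule coprime_common_divisor_nat)
  then show False using assms by simp
qed

lemma phi_not_rat: "phi \<notin> \<rat>"
proof
  assume "phi \<in> \<rat>"
  then have "2 * phi - 1 \<in> \<rat>" by simp
  moreover have "2 * phi - 1 = sqrt (real 5)" by (simp add: phi_def field_simps)
  ultimately show False using sqrt_prime_not_rat[of 5] by simp
qed

lemma phi_squared: "phi^2 = phi + 1"
  by (simp add: phi_def field_simps power2_eq_square)

lemma mult_phi_phi: "x * phi * phi = x * phi + x"
proof -
  have "x * phi * phi = x * phi\<^sup>2" by (simp add: power2_eq_square mult.assoc)
  then show ?thesis by (simp add: phi_squared distrib_left)
qed

lemma phi_bounds: "1.618 < phi" "phi < 1.6181"
proof -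
  have "2.236 < sqrt 5" by (rule real_less_rsqrt) (simp add: power2_eq_square)
  moreover have "sqrt 5 < 2.2362" by (rule real_less_lsqrt) (auto simp: power2_eq_square)
  ultimately show "1.618 < phi" "phi < 1.6181" by (auto simp: phi_def)
qed

lemma of_int_mult_irrational_neq:
  fixes r :: real
  assumes "r \<notin> \<rat>" "m \<noteq> 0"
  shows "of_int m * r \<noteq> of_int k"
proof
  assume "of_int m * r = of_int k"
  then have "r = of_int k / of_int m" using assms(2) by (simp add: field_simps)
  then show False using assms(1) by simp
qed

lemma floor_plus_floor_diff:
  fixes x :: real
  assumes "x \<notin> \<int>"
  shows "\<lfloor>x\<rfloor> + \<lfloor>of_int k - x\<rfloor> = k - 1"
proof -
  have "of_int \<lfloor>x\<rfloor> \<noteq> x" using assms by (metis Ints_of_int)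
  then have "of_int \<lfloor>x\<rfloor> < x" by (simp add: order_less_le)
  then have "\<lfloor>of_int k - x\<rfloor> = k - \<lfloor>x\<rfloor> - 1" by (simp add: floor_eq_iff) linarith
  then show ?thesis by simp
qed

lemma beatty_hit_iff:
  fixes r :: real and k :: int
  assumes "r \<notin> \<rat>" "r > 0" "k \<ge> 1"
  shows "(\<exists>m\<ge>1. \<lfloor>of_int m * r\<rfloor> = k) \<longleftrightarrow> \<lfloor>of_int k / r\<rfloor> < \<lfloor>of_int (k + 1) / r\<rfloor>"
  \<comment> \<open>the \<open>m\<close> with \<open>\<lfloor>m r\<rfloor> = k\<close> are the integers in the open interval \<open>(k/r, (k+1)/r)\<close>\<close>
proof
  assume "\<exists>m\<ge>1. \<lfloor>of_int m * r\<rfloor> = k"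
  then obtain m where "m \<ge> 1" and m: "\<lfloor>of_int m * r\<rfloor> = k" by blast
  then have "of_int m * r \<noteq> of_int k" using of_int_mult_irrational_neq[OF assms(1)] by simp
  with m have "of_int k < of_int m * r" "of_int m * r < of_int (k + 1)" by linarith+
  then have "of_int k / r < of_int m" "of_int m < of_int (k + 1) / r"
    using assms(2) by (simp_all add: field_simps)
  then have "\<lfloor>of_int k / r\<rfloor> < m" "m \<le> \<lfloor>of_int (k + 1) / r\<rfloor>"
    by (simp_all add: floor_less_iff le_floor_iff)
  then show "\<lfloor>of_int k / r\<rfloor> < \<lfloor>of_int (k + 1) / r\<rfloor>" by linarith
next
  define m where "m = \<lfloor>of_int (k + 1) / r\<rfloor>"
  assume "\<lfloor>of_int k / r\<rfloor> < m"
  then have "of_int k / r < of_int m" by (simp add: floor_less_iff)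
  moreover have "0 < of_int k / r" using assms(2,3) by simp
  ultimately have "of_int k < of_int m * r" "m \<ge> 1"
    using assms(2) by (simp add: pos_divide_less_eq, linarith)
  moreover have "of_int m * r \<le> of_int (k + 1)"
    using of_int_floor_le pos_le_divide_eq assms(2) unfolding m_def by blast
  moreover have "of_int m * r \<noteq> of_int (k + 1)"
    using of_int_mult_irrational_neq[OF assms(1), of m "k + 1"] \<open>m \<ge> 1\<close> by simp
  ultimately show "\<exists>m\<ge>1. \<lfloor>of_int m * r\<rfloor> = k" by (intro exI[of _ m]) (simp add: floor_eq_iff)
qed

lemma rayleigh_beatty:
  fixes r s :: real and k :: int
  assumes r: "r \<notin> \<rat>" "r > 0" and s: "s > 0" and rs: "1 / r + 1 / s = 1" and k: "k \<ge> 1"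
  shows "(\<exists>m\<ge>1. \<lfloor>of_int m * r\<rfloor> = k) \<longleftrightarrow> \<not> (\<exists>n\<ge>1. \<lfloor>of_int n * s\<rfloor> = k)"
proof -
  have "s \<notin> \<rat>"
  proof
    assume "s \<in> \<rat>"
    then have "1 / (1 - 1 / s) \<in> \<rat>" by (intro Rats_divide Rats_diff Rats_1)
    moreover have "1 - 1 / s = 1 / r" using rs by linarith
    ultimately show False using r(1) by simp
  qed
  have not_int: "of_int j / r \<notin> \<int>" if "j \<noteq> 0" for j
  proof
    assume "of_int j / r \<in> \<int>"
    then obtain i where i: "of_int j / r = of_int i" by (elim Ints_cases)
    with that have "i \<noteq> 0" using r(2) by auto
    moreover from i have "of_int i * r = of_int j" using r(2) by (simp add: field_simps)
    ultimately show False using of_int_mult_irrational_neq[OF r(1)] by blast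
  qed
  have complement: "of_int j / s = of_int j - of_int j / r" for j
  proof -
    have "of_int j / s = of_int j * (1 / s)" by simp
    also have "1 / s = 1 - 1 / r" using rs by linarith
    finally show ?thesis by (simp add: right_diff_distrib)
  qed
  have sum_k: "\<lfloor>of_int k / r\<rfloor> + \<lfloor>of_int k / s\<rfloor> = k - 1"
    using floor_plus_floor_diff[OF not_int, of k k] k unfolding complement by simp
  have sum_k1: "\<lfloor>of_int (k + 1) / r\<rfloor> + \<lfloor>of_int (k + 1) / s\<rfloor> = k"
    using floor_plus_floor_diff[OF not_int, of "k + 1" "k + 1"] k unfolding complement by simp
  have "\<lfloor>of_int k / r\<rfloor> \<le> \<lfloor>of_int (k + 1) / r\<rfloor>" "\<lfloor>of_int k / s\<rfloor> \<le> \<lfloor>of_int (k + 1) / s\<rfloor>"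
    using r(2) s by (auto intro!: floor_mono divide_right_mono)
  with sum_k sum_k1 show ?thesis
    unfolding beatty_hit_iff[OF r k] beatty_hit_iff[OF \<open>s \<notin> \<rat>\<close> s k] by linarith
qed

lemma image_partition_refine:
  assumes inj: "inj_on f X" and cover: "f ` X \<union> h ` X = X" and disj: "f ` X \<inter> h ` X = {}"
  shows "f ` h ` X \<union> h ` X \<union> f ` f ` f ` X \<union> f ` f ` h ` X = X"
    and "f ` h ` X \<inter> h ` X = {}" "f ` h ` X \<inter> f ` f ` f ` X = {}" "f ` h ` X \<inter> f ` f ` h ` X = {}"
    and "h ` X \<inter> f ` f ` f ` X = {}" "h ` X \<inter> f ` f ` h ` X = {}"
    and "f ` f ` f ` X \<inter> f ` f ` h ` X = {}"
proof -
  have closed: "f x \<in> X" "h x \<in> X" if "x \<in> X" for x using cover that by auto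
  have X_sub: "X \<subseteq> h ` X \<union> f ` X" using cover by blast
  have f_sub: "f ` X \<subseteq> f ` h ` X \<union> f ` f ` X"
    using image_mono[OF X_sub, of f] by (simp only: image_Un)
  have ff_sub: "f ` f ` X \<subseteq> f ` f ` h ` X \<union> f ` f ` f ` X"
    using image_mono[OF f_sub, of f] by (simp only: image_Un)
  have "X \<subseteq> h ` X \<union> (f ` h ` X \<union> (f ` f ` h ` X \<union> f ` f ` f ` X))"
    by (rule order_trans[OF X_sub Un_mono[OF order_refl order_trans[OF f_sub Un_mono[OF order_refl ff_sub]]]])
  then have "X \<subseteq> f ` h ` X \<union> h ` X \<union> f ` f ` f ` X \<union> f ` f ` h ` X"
    by (simp only: Un_ac)
  moreover have "f ` h ` X \<union> h ` X \<union> f ` f ` f ` X \<union> f ` f ` h ` X \<subseteq> X"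
    using closed by auto
  ultimately show "f ` h ` X \<union> h ` X \<union> f ` f ` f ` X \<union> f ` f ` h ` X = X" by (rule subset_antisym[rotated])
  have "h x \<noteq> f y" "f y \<noteq> h x" if "x \<in> X" "y \<in> X" for x y using disj that by auto
  with closed show "f ` h ` X \<inter> h ` X = {}" "f ` h ` X \<inter> f ` f ` f ` X = {}"
      "f ` h ` X \<inter> f ` f ` h ` X = {}" "h ` X \<inter> f ` f ` f ` X = {}" "h ` X \<inter> f ` f ` h ` X = {}"
      "f ` f ` f ` X \<inter> f ` f ` h ` X = {}"
    by (auto simp: inj_on_eq_iff[OF inj])
qed

definition lower_wythoff :: "int \<Rightarrow> int" where
  "lower_wythoff n = \<lfloor>of_int n * phi\<rfloor>"

definition upper_wythoff :: "int \<Rightarrow> int" where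
  "upper_wythoff n = lower_wythoff n + n"

lemma upper_wythoff_eq_floor: "upper_wythoff n = \<lfloor>of_int n * (phi + 1)\<rfloor>"
  by (simp add: upper_wythoff_def lower_wythoff_def distrib_left)

lemma lower_wythoff_bounds:
  assumes "n \<noteq> 0"
  shows "of_int (lower_wythoff n) < of_int n * phi" "of_int n * phi < of_int (lower_wythoff n) + 1"
proof -
  have "of_int (lower_wythoff n) \<le> of_int n * phi" by (simp add: lower_wythoff_def)
  moreover have "of_int n * phi \<noteq> of_int (lower_wythoff n)"
    by (rule of_int_mult_irrational_neq[OF phi_not_rat assms])
  ultimately show "of_int (lower_wythoff n) < of_int n * phi" by (simp add: order_less_le)
  show "of_int n * phi < of_int (lower_wythoff n) + 1"
    unfolding lower_wythoff_def by linarith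
qed

lemma strict_mono_lower_wythoff: "strict_mono lower_wythoff"
proof
  fix m n :: int
  assume "m < n"
  then have "of_int (m + 1) * phi \<le> of_int n * phi"
    using phi_bounds by (intro mult_right_mono) auto
  then have "of_int m * phi + 1 \<le> of_int n * phi"
    using phi_bounds by (simp add: distrib_right)
  then have "\<lfloor>of_int m * phi + 1\<rfloor> \<le> \<lfloor>of_int n * phi\<rfloor>" by (rule floor_mono)
  then show "lower_wythoff m < lower_wythoff n" by (simp add: lower_wythoff_def)
qed

lemma lower_wythoff_ge_1: "n \<ge> 1 \<Longrightarrow> lower_wythoff n \<ge> 1"
  using strict_mono_lower_wythoff[THEN strict_monoD, of 0 n] by (simp add: lower_wythoff_def)

lemma upper_wythoff_ge_1: "n \<ge> 1 \<Longrightarrow> upper_wythoff n \<ge> 1"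
  using lower_wythoff_ge_1[of n] by (simp add: upper_wythoff_def)

lemma lower_wythoff_lower_wythoff:
  assumes "n \<noteq> 0"
  shows "lower_wythoff (lower_wythoff n) = upper_wythoff n - 1"
proof -
  define a :: real where "a = of_int (lower_wythoff n)"
  define f where "f = of_int n * phi - a"
  have f: "0 < f" "f < 1" using lower_wythoff_bounds[OF assms] by (simp_all add: f_def a_def)
  \<comment> \<open>multiply \<open>n \<phi> = a + f\<close> by \<open>\<phi>\<close> and use \<open>\<phi>\<^sup>2 = \<phi> + 1\<close>\<close>
  have "a * phi = a + of_int n - f * (phi - 1)"
    using mult_phi_phi[of "of_int n"] by (simp add: f_def algebra_simps)
  moreover have "0 < f * (phi - 1)" "f * (phi - 1) < 1"
    using f phi_bounds mult_strict_mono[of f 1 "phi - 1" 1] by simp_all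
  ultimately have "\<lfloor>a * phi\<rfloor> = lower_wythoff n + n - 1"
    by (simp add: a_def floor_eq_iff)
  then show ?thesis by (simp add: a_def lower_wythoff_def upper_wythoff_def)
qed

lemma lower_wythoff_upper_wythoff:
  "lower_wythoff (upper_wythoff n) = lower_wythoff n + upper_wythoff n"
proof -
  define a :: real where "a = of_int (lower_wythoff n)"
  define f where "f = of_int n * phi - a"
  have f: "0 \<le> f" "f < 1" by (simp_all add: f_def a_def lower_wythoff_def) linarith
  have "(a + of_int n) * phi = 2 * a + of_int n + f * (2 - phi)"
    using mult_phi_phi[of "of_int n"] by (simp add: f_def algebra_simps)
  moreover have "0 \<le> f * (2 - phi)" "f * (2 - phi) < 1"
    using f phi_bounds mult_left_le[of "2 - phi" f] by simp_all
  ultimately have "\<lfloor>(a + of_int n) * phi\<rfloor> = 2 * lower_wythoff n + n"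
    by (subst floor_eq_iff) (simp add: a_def)
  then show ?thesis by (simp add: a_def lower_wythoff_def upper_wythoff_def)
qed

lemma lower_wythoff_3:
  assumes "n \<ge> 1"
  shows "lower_wythoff (lower_wythoff (lower_wythoff n)) = lower_wythoff n + upper_wythoff n - 2"
proof -
  have "lower_wythoff n \<noteq> 0" using lower_wythoff_ge_1[OF assms] by simp
  then have "lower_wythoff (lower_wythoff (lower_wythoff n)) = upper_wythoff (lower_wythoff n) - 1"
    by (rule lower_wythoff_lower_wythoff)
  also have "\<dots> = lower_wythoff n + upper_wythoff n - 2"
    using assms by (simp add: upper_wythoff_def[of "lower_wythoff n"] lower_wythoff_lower_wythoff)
  finally show ?thesis .
qed

lemma lower_wythoff_2_upper_wythoff:
  assumes "n \<ge> 1"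
  shows "lower_wythoff (lower_wythoff (upper_wythoff n)) = lower_wythoff n + 2 * upper_wythoff n - 1"
proof -
  have "upper_wythoff n \<noteq> 0" using upper_wythoff_ge_1[OF assms] by simp
  then have "lower_wythoff (lower_wythoff (upper_wythoff n)) = upper_wythoff (upper_wythoff n) - 1"
    by (rule lower_wythoff_lower_wythoff)
  also have "\<dots> = lower_wythoff n + 2 * upper_wythoff n - 1"
    by (simp add: upper_wythoff_def[of "upper_wythoff n"] lower_wythoff_upper_wythoff)
  finally show ?thesis .
qed

lemma floor_phi_minus_1_mult_lower_wythoff:
  assumes "m \<noteq> 0"
  shows "\<lfloor>(phi - 1) * of_int (lower_wythoff m) + of_int c\<rfloor> = m - 1 + c"
proof -
  have "(phi - 1) * of_int (lower_wythoff m) + of_int c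
      = of_int (lower_wythoff m) * phi + of_int (c - lower_wythoff m)"
    by (simp add: algebra_simps)
  then have "\<lfloor>(phi - 1) * of_int (lower_wythoff m) + of_int c\<rfloor>
      = lower_wythoff (lower_wythoff m) + c - lower_wythoff m"
    by (simp add: lower_wythoff_def[of "lower_wythoff m"])
  then show ?thesis
    using assms by (simp add: lower_wythoff_lower_wythoff upper_wythoff_def)
qed

lemma wythoff_partition:
  "lower_wythoff ` Npos \<union> upper_wythoff ` Npos = Npos"
  "lower_wythoff ` Npos \<inter> upper_wythoff ` Npos = {}"
proof -
  have "phi * (phi + 1) = phi + (phi + 1)"
    using phi_squared by (simp add: power2_eq_square algebra_simps)
  then have inv_sum: "1 / phi + 1 / (phi + 1) = 1"
    using phi_bounds by (simp add: field_simps)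
  have lower_iff: "k \<in> lower_wythoff ` Npos \<longleftrightarrow> (\<exists>m\<ge>1. \<lfloor>of_int m * phi\<rfloor> = k)" for k
    by (auto simp: Npos_def lower_wythoff_def)
  have upper_iff: "k \<in> upper_wythoff ` Npos \<longleftrightarrow> (\<exists>m\<ge>1. \<lfloor>of_int m * (phi + 1)\<rfloor> = k)" for k
    by (auto simp: Npos_def upper_wythoff_eq_floor)
  have "k \<in> lower_wythoff ` Npos \<longleftrightarrow> k \<notin> upper_wythoff ` Npos" if "k \<in> Npos" for k
    unfolding lower_iff upper_iff
    using rayleigh_beatty[OF phi_not_rat _ _ inv_sum, of k] that phi_bounds by (simp add: Npos_def)
  moreover have "lower_wythoff ` Npos \<subseteq> Npos" "upper_wythoff ` Npos \<subseteq> Npos"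
    using lower_wythoff_ge_1 upper_wythoff_ge_1 by (auto simp: Npos_def)
  ultimately show
    "lower_wythoff ` Npos \<union> upper_wythoff ` Npos = Npos"
    "lower_wythoff ` Npos \<inter> upper_wythoff ` Npos = {}"
    by blast+
qed

lemma fib_3_4: "fib 3 = 2" "fib 4 = 3"
  by (simp_all add: numeral_eq_Suc)

lemma R_eq_image: "R i j = (\<lambda>n. int (fib (i + 1)) * lower_wythoff n + int (fib i) * n - j) ` Npos"
  unfolding R_def Npos_def lower_wythoff_def by auto

lemma R_1_0: "R 1 0 = upper_wythoff ` Npos"
  unfolding R_eq_image upper_wythoff_def by (simp add: fib_3_4)

lemma R_2_0: "R 2 0 = lower_wythoff ` upper_wythoff ` Npos"
  unfolding R_eq_image image_image
  by (intro image_cong refl) (simp add: fib_3_4 lower_wythoff_upper_wythoff, simp add: upper_wythoff_def)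

lemma R_2_2: "R 2 2 = lower_wythoff ` lower_wythoff ` lower_wythoff ` Npos"
  unfolding R_eq_image image_image
  by (intro image_cong refl) (simp add: Npos_def fib_3_4 lower_wythoff_3 upper_wythoff_def)

lemma R_3_1: "R 3 1 = lower_wythoff ` lower_wythoff ` upper_wythoff ` Npos"
  unfolding R_eq_image image_image
  by (intro image_cong refl)
    (simp add: Npos_def fib_3_4 lower_wythoff_2_upper_wythoff, simp add: upper_wythoff_def)

lemmas R_pieces_partition =
  image_partition_refine[OF strict_mono_imp_inj_on[OF strict_mono_lower_wythoff] wythoff_partition,
    folded R_3_1 R_2_2, folded R_2_0, folded R_1_0]

lemma g_on_pieces:
  "n \<in> R 2 0 \<Longrightarrow> g n = \<lfloor>phi * of_int n\<rfloor>"
  "n \<in> R 1 0 \<Longrightarrow> g n = \<lfloor>phi * of_int n - 2\<rfloor>"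
  "n \<in> R 2 2 \<Longrightarrow> g n = \<lfloor>(phi - 1) * of_int n + 2\<rfloor>"
  "n \<in> R 3 1 \<Longrightarrow> g n = \<lfloor>(phi - 1) * of_int n + 1\<rfloor>"
proof -
  have "n \<notin> R 2 0" if "n \<in> R 1 0 \<or> n \<in> R 2 2 \<or> n \<in> R 3 1"
    using that R_pieces_partition(2-4) by blast
  moreover have "n \<notin> R 1 0" if "n \<in> R 2 2 \<or> n \<in> R 3 1"
    using that R_pieces_partition(5,6) by blast
  moreover have "n \<notin> R 2 2" if "n \<in> R 3 1"
    using that R_pieces_partition(7) by blast
  ultimately show
    "n \<in> R 2 0 \<Longrightarrow> g n = \<lfloor>phi * of_int n\<rfloor>"
    "n \<in> R 1 0 \<Longrightarrow> g n = \<lfloor>phi * of_int n - 2\<rfloor>"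
    "n \<in> R 2 2 \<Longrightarrow> g n = \<lfloor>(phi - 1) * of_int n + 2\<rfloor>"
    "n \<in> R 3 1 \<Longrightarrow> g n = \<lfloor>(phi - 1) * of_int n + 1\<rfloor>"
    by (simp_all add: g_def)
qed

lemma g_upper_wythoff:
  assumes "n \<ge> 1"
  shows "g (upper_wythoff n) = lower_wythoff (lower_wythoff (lower_wythoff n))"
proof -
  have "upper_wythoff n \<in> R 1 0" unfolding R_1_0 using assms by (simp add: Npos_def)
  then have "g (upper_wythoff n) = lower_wythoff (upper_wythoff n) - 2"
    by (simp add: g_on_pieces lower_wythoff_def mult.commute)
  also have "\<dots> = lower_wythoff n + upper_wythoff n - 2"
    by (simp add: lower_wythoff_upper_wythoff)
  also have "\<dots> = lower_wythoff (lower_wythoff (lower_wythoff n))"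
    using assms by (simp add: lower_wythoff_3)
  finally show ?thesis .
qed

lemma g_lower_wythoff_upper_wythoff:
  assumes "n \<ge> 1"
  shows "g (lower_wythoff (upper_wythoff n)) = lower_wythoff (lower_wythoff (upper_wythoff n))"
proof -
  have "lower_wythoff (upper_wythoff n) \<in> R 2 0" unfolding R_2_0 using assms by (simp add: Npos_def)
  then show ?thesis by (simp add: g_on_pieces lower_wythoff_def mult.commute)
qed

lemma g_lower_wythoff_3:
  assumes "n \<ge> 1"
  shows "g (lower_wythoff (lower_wythoff (lower_wythoff n))) = upper_wythoff n"
proof -
  have "lower_wythoff (lower_wythoff (lower_wythoff n)) \<in> R 2 2" unfolding R_2_2 using assms by (simp add: Npos_def)
  then have "g (lower_wythoff (lower_wythoff (lower_wythoff n))) = lower_wythoff (lower_wythoff n) + 1"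
    using floor_phi_minus_1_mult_lower_wythoff[of "lower_wythoff (lower_wythoff n)" 2]
      lower_wythoff_ge_1[OF lower_wythoff_ge_1[OF assms]]
    by (simp add: g_on_pieces)
  then show ?thesis using assms by (simp add: lower_wythoff_lower_wythoff)
qed

lemma g_lower_wythoff_2_upper_wythoff:
  assumes "n \<ge> 1"
  shows "g (lower_wythoff (lower_wythoff (upper_wythoff n))) = lower_wythoff (upper_wythoff n)"
proof -
  have "lower_wythoff (lower_wythoff (upper_wythoff n)) \<in> R 3 1" unfolding R_3_1 using assms by (simp add: Npos_def)
  then show ?thesis
    using floor_phi_minus_1_mult_lower_wythoff[of "lower_wythoff (upper_wythoff n)" 1]
      lower_wythoff_ge_1[OF upper_wythoff_ge_1[OF assms]]
    by (simp add: g_on_pieces)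
qed

lemma g_involution:
  assumes "n \<in> Npos"
  shows "g n \<in> Npos" and "g (g n) = n"
proof -
  have "n \<in> R 2 0 \<union> R 1 0 \<union> R 2 2 \<union> R 3 1" using assms R_pieces_partition(1) by simp
  then consider
      m where "m \<in> Npos" "n = lower_wythoff (upper_wythoff m)"
    | m where "m \<in> Npos" "n = upper_wythoff m"
    | m where "m \<in> Npos" "n = lower_wythoff (lower_wythoff (lower_wythoff m))"
    | m where "m \<in> Npos" "n = lower_wythoff (lower_wythoff (upper_wythoff m))"
    unfolding R_1_0 R_2_0 R_2_2 R_3_1 by blast
  then have "g n \<in> Npos \<and> g (g n) = n"
    by cases (simp_all add: Npos_def g_upper_wythoff g_lower_wythoff_3 g_lower_wythoff_upper_wythoff
      g_lower_wythoff_2_upper_wythoff lower_wythoff_ge_1 upper_wythoff_ge_1)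
  then show "g n \<in> Npos" "g (g n) = n" by simp_all
qed

lemma lower_wythoff_small:
  "lower_wythoff 1 = 1" "lower_wythoff 2 = 3" "lower_wythoff 3 = 4" "lower_wythoff 4 = 6"
  "lower_wythoff 5 = 8" "lower_wythoff 6 = 9" "lower_wythoff 8 = 12" "lower_wythoff 9 = 14"
  unfolding lower_wythoff_def using phi_bounds by (simp_all add: floor_eq_iff)

lemma g_first_values: "map g [1..10] = [2, 1, 4, 3, 6, 5, 9, 12, 7, 14]"
proof -
  note small_values = lower_wythoff_small upper_wythoff_def
  have "[1..10::int] = [1, 2, 3, 4, 5, 6, 7, 8, 9, 10]" by (simp add: upto.simps)
  moreover have "g 1 = 2" "g 6 = 5" "g 9 = 7"
    using g_lower_wythoff_3[of 1] g_lower_wythoff_3[of 2] g_lower_wythoff_3[of 3] by (simp_all add: small_values)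
  moreover have "g 2 = 1" "g 5 = 6" "g 7 = 9" "g 10 = 14"
    using g_upper_wythoff[of 1] g_upper_wythoff[of 2] g_upper_wythoff[of 3] g_upper_wythoff[of 4]
    by (simp_all add: small_values)
  moreover have "g 3 = 4" "g 8 = 12"
    using g_lower_wythoff_upper_wythoff[of 1] g_lower_wythoff_upper_wythoff[of 2] by (simp_all add: small_values)
  moreover have "g 4 = 3"
    using g_lower_wythoff_2_upper_wythoff[of 1] by (simp add: small_values)
  ultimately show ?thesis by simp
qed

lemma R_permutationI:
  assumes "bij_betw \<pi> Npos Npos" and "distinct ps" and "disjoint_family_on piece_set (set ps)"
    and "(\<Union>p\<in>set ps. piece_set p) = Npos" and "\<forall>p\<in>set ps. \<forall>n\<in>piece_set p. \<pi> n = piece_fun p n"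
  shows "R_permutation \<pi>"
  unfolding R_permutation_def
proof (intro conjI exI[of _ ps])
  show "\<forall>k l. k < length ps \<and> l < length ps \<and> k \<noteq> l \<longrightarrow> piece_set (ps ! k) \<inter> piece_set (ps ! l) = {}"
    using assms(2,3) by (auto simp: disjoint_family_on_def nth_eq_iff_index_eq)
qed (use assms in auto)

lemma R_permutation_g: "R_permutation g"
proof (rule R_permutationI)
  show "bij_betw g Npos Npos"
    by (rule bij_betw_byWitness[where f' = g]) (use g_involution in auto)
  let ?ps = "[(2, 0, 1, 0, 0), (1, 0, 1, 0, -2), (2, 2, 1, -1, 2), (3, 1, 1, -1, 1)]
    :: (nat \<times> int \<times> int \<times> int \<times> int) list"
  show "distinct ?ps" by simp
  show "disjoint_family_on piece_set (set ?ps)"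
    using R_pieces_partition(2-7) by (auto simp: disjoint_family_on_def piece_set_def)
  show "(\<Union>p\<in>set ?ps. piece_set p) = Npos"
    using R_pieces_partition(1) by (auto simp: piece_set_def)
  show "\<forall>p\<in>set ?ps. \<forall>n\<in>piece_set p. g n = piece_fun p n"
    by (auto simp: piece_set_def piece_fun_def g_on_pieces mult.commute)
qed

theorem theorem4p2:
  shows "R 2 0 \<union> R 1 0 \<union> R 2 2 \<union> R 3 1 = Npos
    \<and> R 2 0 \<inter> R 1 0 = {} \<and> R 2 0 \<inter> R 2 2 = {} \<and> R 2 0 \<inter> R 3 1 = {}
    \<and> R 1 0 \<inter> R 2 2 = {} \<and> R 1 0 \<inter> R 3 1 = {} \<and> R 2 2 \<inter> R 3 1 = {}
    \<and> R_permutation g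
    \<and> (\<forall>n\<in>Npos. g (g n) = n)
    \<and> (\<exists>n\<in>Npos. g n \<noteq> n)
    \<and> map g [1..10] = [2,1,4,3,6,5,9,12,7,14]"
proof -
  have "g 1 \<noteq> 1" using g_first_values by (simp add: upto.simps)
  then have "\<exists>n\<in>Npos. g n \<noteq> n" by (auto simp: Npos_def)
  with R_pieces_partition R_permutation_g g_first_values show ?thesis
    by (simp add: g_involution)
qed

end
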